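(* If $n \ge 3$ is odd, then $\mathrm{sg_e}(K_{n,n}) \ge n+2$ and $\mathrm{sg_e}(K_{n,n-1}) \ge n+1$.
   Context: All graphs are finite, simple and connected. A set $S \subseteq V(G)$ is a strong edge geodetic set of $G$ if one can assign to every unordered pair $\{u,v\}$ of distinct vertices of $S$ either one shortest $u,v$-path $P_{uv}$ in $G$ or no path, in such a way that every edge of $G$ lies on at least one of the assigned paths. The strong edge geodetic number $\mathrm{sg_e}(G)$ is the minimum cardinality of a strong edge geodetic set of $G$. $K_{n,m}$ denotes the complete bipartite graph with parts of sizes $n$ and $m$. *)

theory Defs
  imports Main
begin

type_synonym 'a graph = "'a set \<times> 'a set set"

definition verts :: "'a graph \<Rightarrow> 'a set" where "verts G = fst G"
definition edges :: "'a graph \<Rightarrow> 'a set set" where "edges G = snd G"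

definition is_path :: "'a graph \<Rightarrow> 'a list \<Rightarrow> bool" where
  "is_path G p \<longleftrightarrow> p \<noteq> [] \<and> set p \<subseteq> verts G \<and> distinct p \<and>
     (\<forall>i. Suc i < length p \<longrightarrow> {p ! i, p ! Suc i} \<in> edges G)"

definition path_edges :: "'a list \<Rightarrow> 'a set set" where
  "path_edges p = {{p ! i, p ! Suc i} | i. Suc i < length p}"

definition is_shortest_path :: "'a graph \<Rightarrow> 'a \<Rightarrow> 'a \<Rightarrow> 'a list \<Rightarrow> bool" where
  "is_shortest_path G u v p \<longleftrightarrow> is_path G p \<and> hd p = u \<and> last p = v \<and>
     (\<forall>q. is_path G q \<and> hd q = u \<and> last q = v \<longrightarrow> length p \<le> length q)"

text \<open>Strong edge geodetic set: each unordered pair of distinct vertices of S gets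
  either one shortest path between them (Some p) or no path (None), and every edge lies
  on some assigned path.\<close>
definition strong_edge_geodetic :: "'a graph \<Rightarrow> 'a set \<Rightarrow> bool" where
  "strong_edge_geodetic G S \<longleftrightarrow> S \<subseteq> verts G \<and>
     (\<exists>A :: 'a set \<Rightarrow> 'a list option.
        (\<forall>u\<in>S. \<forall>v\<in>S. u \<noteq> v \<longrightarrow>
           (case A {u, v} of None \<Rightarrow> True
            | Some p \<Rightarrow> is_shortest_path G u v p \<or> is_shortest_path G v u p)) \<and>
        (\<forall>e\<in>edges G. \<exists>u\<in>S. \<exists>v\<in>S. u \<noteq> v \<and>
           (\<exists>p. A {u, v} = Some p \<and> e \<in> path_edges p)))"

definition sg_e :: "'a graph \<Rightarrow> nat" where
  "sg_e G = (LEAST k. \<exists>S. strong_edge_geodetic G S \<and> card S = k)"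

definition K_bip :: "nat \<Rightarrow> nat \<Rightarrow> (nat + nat) graph" where
  "K_bip n m = (Inl ` {..<n} \<union> Inr ` {..<m},
                {{Inl i, Inr j} | i j. i < n \<and> j < m})"

end

theory Submission
  imports Defs
begin

text \<open>In a complete bipartite graph with parts \<open>P\<close> and \<open>Q\<close> every geodesic has at most two
  edges, so an edge can only be covered by a geodesic that starts at one of its ends or runs
  through it as the middle vertex of a path \<open>a, y, c\<close>. Hence a strong edge geodetic set \<open>S\<close>
  contains a whole part, say \<open>P\<close>, and each \<open>y \<in> Q - S\<close> must be the middle vertex of the
  geodesics assigned to at least \<open>\<lceil>|P|/2\<rceil>\<close> pairs of \<open>P\<close>; distinct such \<open>y\<close> use disjoint
  pairs, so \<open>|Q - S| \<lceil>|P|/2\<rceil> \<le> (|P| choose 2)\<close>. For odd \<open>|P|\<close> this forces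
  \<open>|Q - S| \<le> |P| - 2\<close>, for even \<open>|P|\<close> it forces \<open>|Q - S| \<le> |P| - 1\<close>.\<close>

lemma card_le_double_card_of_pair_cover:
  assumes "finite F" "\<forall>\<pi>\<in>F. card \<pi> = 2" "P \<subseteq> \<Union>F"
  shows "card P \<le> 2 * card F"
proof -
  have "finite (\<Union>F)"
    using assms(1,2) card_ge_0_finite by force
  then have "card P \<le> card (\<Union>F)"
    using assms(3) by (rule card_mono)
  also have "\<dots> \<le> (\<Sum>\<pi>\<in>F. card \<pi>)"
    by (rule card_Union_le_sum_card)
  also have "\<dots> = 2 * card F"
    using assms(2) by simp
  finally show ?thesis .
qed

lemma ceil_half_mult_le_choose_two_less:
  assumes "k * ((m + 1) div 2) \<le> m choose 2" "0 < m"
  shows "k < m"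
proof -
  have "m \<le> 2 * ((m + 1) div 2)" by presburger
  then have "k * m \<le> 2 * (k * ((m + 1) div 2))"
    by (metis mult_le_mono2 mult.left_commute)
  also have "\<dots> \<le> m * (m - 1)"
    using assms(1) by (simp add: choose_two)
  finally show ?thesis
    using assms(2) by (simp add: mult.commute)
qed

lemma ceil_half_mult_le_choose_two_odd:
  assumes "k * ((m + 1) div 2) \<le> m choose 2" "odd m" "1 < m"
  shows "k + 2 \<le> m"
proof -
  obtain t where t: "m = 2 * t + 1" using \<open>odd m\<close> by (rule oddE)
  with assms have "k * (t + 1) \<le> (2 * t + 1) * t"
    by (simp add: choose_two)
  also have "\<dots> < 2 * t * (t + 1)"
    using t assms(3) by simp
  finally have "k < 2 * t"
    by (rule mult_less_cancel2[THEN iffD1, THEN conjunct2])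
  with t show ?thesis by simp
qed

lemma is_path_2:
  "is_path G [a, b] \<longleftrightarrow> a \<noteq> b \<and> a \<in> verts G \<and> b \<in> verts G \<and> {a, b} \<in> edges G"
  unfolding is_path_def by (auto simp: less_Suc_eq)

lemma is_path_3:
  "is_path G [a, b, c] \<longleftrightarrow> a \<noteq> b \<and> a \<noteq> c \<and> b \<noteq> c \<and> a \<in> verts G \<and> b \<in> verts G
     \<and> c \<in> verts G \<and> {a, b} \<in> edges G \<and> {b, c} \<in> edges G"
  unfolding is_path_def by (auto simp: less_Suc_eq)

lemma path_edges_2: "path_edges [a, b] = {{a, b}}"
  unfolding path_edges_def by (auto simp: less_Suc_eq)

lemma is_shortest_path_edge:
  assumes "is_path G [a, b]"
  shows "is_shortest_path G a b [a, b]"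
  unfolding is_shortest_path_def
proof (intro conjI allI impI)
  fix q assume q: "is_path G q \<and> hd q = a \<and> last q = b"
  have "a \<noteq> b" using assms by (simp add: is_path_2)
  with q have "q \<noteq> []" "last q \<noteq> hd q" unfolding is_path_def by auto
  then show "length [a, b] \<le> length q"
    by (cases q rule: remdups_adj.cases) auto
qed (use assms in auto)

lemma path_edge_interior_vertex:
  assumes "length p \<le> 3" "{x, y} \<in> path_edges p" "y \<notin> {hd p, last p}"
  shows "\<exists>a c. p = [a, y, c] \<and> x \<in> {a, c}"
proof -
  obtain i where i: "Suc i < length p" "{x, y} = {p ! i, p ! Suc i}"
    using assms(2) unfolding path_edges_def by auto
  then have "p \<noteq> []" by auto
  moreover have "i = 0 \<or> i = 1" "length p = 2 \<or> length p = 3"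
    using i assms(1) by auto
  ultimately have p3: "length p = 3" and y: "y = p ! 1" and x: "x \<in> {p ! 0, p ! 2}"
    using i assms(3)
    by (auto simp: hd_conv_nth last_conv_nth doubleton_eq_iff numeral_2_eq_2)
  from p3 obtain a b c where "p = [a, b, c]"
    by (auto simp: numeral_3_eq_3 length_Suc_conv)
  with y x show ?thesis by auto
qed

lemma strong_edge_geodeticE:
  assumes "strong_edge_geodetic G S"
  obtains A where "\<And>e. e \<in> edges G \<Longrightarrow> \<exists>p. e \<in> path_edges p \<and> hd p \<in> S \<and> last p \<in> S \<and> hd p \<noteq> last p
        \<and> A {hd p, last p} = Some p \<and> is_shortest_path G (hd p) (last p) p"
proof -
  obtain A where geo: "\<forall>u\<in>S. \<forall>v\<in>S. u \<noteq> v \<longrightarrow> (case A {u, v} of None \<Rightarrow> True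
                | Some p \<Rightarrow> is_shortest_path G u v p \<or> is_shortest_path G v u p)"
    and cov: "\<forall>e\<in>edges G. \<exists>u\<in>S. \<exists>v\<in>S. u \<noteq> v \<and> (\<exists>p. A {u, v} = Some p \<and> e \<in> path_edges p)"
    using assms unfolding strong_edge_geodetic_def by blast
  show thesis
  proof (rule that[of A])
    fix e assume "e \<in> edges G"
    then obtain u v p where uv: "u \<in> S" "v \<in> S" "u \<noteq> v" "A {u, v} = Some p" "e \<in> path_edges p"
      using cov by blast
    with geo have "is_shortest_path G u v p \<or> is_shortest_path G v u p" by force
    then show "\<exists>p. e \<in> path_edges p \<and> hd p \<in> S \<and> last p \<in> S \<and> hd p \<noteq> last p
        \<and> A {hd p, last p} = Some p \<and> is_shortest_path G (hd p) (last p) p"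
      using uv by (auto simp: is_shortest_path_def insert_commute)
  qed
qed

lemma strong_edge_geodetic_verts:
  assumes "\<And>e. e \<in> edges G \<Longrightarrow> \<exists>a b. e = {a, b} \<and> a \<noteq> b \<and> a \<in> verts G \<and> b \<in> verts G"
  shows "strong_edge_geodetic G (verts G)"
proof -
  define A where
    "A e = (if e \<in> edges G then Some (SOME p. \<exists>a b. e = {a, b} \<and> p = [a, b]) else None)" for e
  have A_edge: "\<exists>a b. e = {a, b} \<and> A e = Some [a, b] \<and> is_path G [a, b]"
    if e: "e \<in> edges G" for e
  proof -
    obtain a b where ab: "e = {a, b}" "a \<noteq> b" "a \<in> verts G" "b \<in> verts G"
      using assms[OF e] by blast
    then have "\<exists>p. \<exists>a b. e = {a, b} \<and> p = [a, b]" by blast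
    from someI_ex[OF this] obtain a' b' where ab': "e = {a', b'}" "A e = Some [a', b']"
      using e unfolding A_def by auto
    then have "a' = a \<and> b' = b \<or> a' = b \<and> b' = a"
      using ab(1) by (auto simp: doubleton_eq_iff)
    then have "is_path G [a', b']"
      using ab e by (auto simp: is_path_2 insert_commute)
    with ab' show ?thesis by blast
  qed
  have "case A {u, v} of None \<Rightarrow> True
          | Some p \<Rightarrow> is_shortest_path G u v p \<or> is_shortest_path G v u p"
    if "u \<noteq> v" for u v
  proof (cases "{u, v} \<in> edges G")
    case True
    then obtain a b where ab: "{u, v} = {a, b}" "A {u, v} = Some [a, b]" "is_path G [a, b]"
      using A_edge by blast
    then have "is_shortest_path G a b [a, b]"
      by (intro is_shortest_path_edge)
    with ab \<open>u \<noteq> v\<close> show ?thesis by (auto simp: doubleton_eq_iff)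
  qed (simp add: A_def)
  moreover have "\<exists>u\<in>verts G. \<exists>v\<in>verts G. u \<noteq> v \<and> (\<exists>p. A {u, v} = Some p \<and> e \<in> path_edges p)"
    if "e \<in> edges G" for e
    using A_edge[OF that] by (force simp: is_path_2 path_edges_2)
  ultimately show ?thesis
    unfolding strong_edge_geodetic_def by blast
qed

text \<open>The witness \<open>S\<^sub>0\<close> is needed because \<open>sg_e\<close> is a \<open>LEAST\<close>, which is \<open>0\<close> on an empty set.\<close>

lemma le_sg_eI:
  assumes "strong_edge_geodetic G S\<^sub>0" "\<And>S. strong_edge_geodetic G S \<Longrightarrow> b \<le> card S"
  shows "b \<le> sg_e G"
  unfolding sg_e_def by (rule LeastI2_ex) (use assms in auto)

definition complete_bip :: "'a set \<Rightarrow> 'a set \<Rightarrow> 'a graph" where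
  "complete_bip P Q = (P \<union> Q, {{x, y} | x y. x \<in> P \<and> y \<in> Q})"

lemma verts_complete_bip [simp]: "verts (complete_bip P Q) = P \<union> Q"
  by (simp add: complete_bip_def verts_def)

lemma edges_complete_bip [simp]: "edges (complete_bip P Q) = {{x, y} | x y. x \<in> P \<and> y \<in> Q}"
  by (simp add: complete_bip_def edges_def)

lemma complete_bip_commute: "complete_bip P Q = complete_bip Q P"
  unfolding complete_bip_def by (auto simp: insert_commute)

lemma K_bip_eq_complete_bip: "K_bip n m = complete_bip (Inl ` {..<n}) (Inr ` {..<m})"
  unfolding K_bip_def complete_bip_def by auto

lemma edge_complete_bip_other_end:
  assumes "P \<inter> Q = {}" "{a, y} \<in> edges (complete_bip P Q)" "y \<in> Q"
  shows "a \<in> P"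
  using assms by (auto simp: doubleton_eq_iff)

lemma shortest_path_complete_bip_length:
  assumes disj: "P \<inter> Q = {}"
    and sp: "is_shortest_path (complete_bip P Q) u v p" and "u \<noteq> v"
  shows "length p \<le> 3"
proof -
  let ?G = "complete_bip P Q"
  have p: "is_path ?G p" "hd p = u" "last p = v"
    using sp unfolding is_shortest_path_def by auto
  then have "Suc 0 < length p"
    using \<open>u \<noteq> v\<close> unfolding is_path_def by (cases p rule: remdups_adj.cases) auto
  with p(1) obtain x y where "x \<in> P" "y \<in> Q"
    unfolding is_path_def by fastforce
  moreover have uv: "u \<in> P \<union> Q" "v \<in> P \<union> Q"
    using p hd_in_set last_in_set unfolding is_path_def by auto
  ultimately consider "u \<in> P" "v \<in> P" | "u \<in> Q" "v \<in> Q" | "{u, v} \<in> edges ?G"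
    by (auto simp: insert_commute; blast)
  then have "\<exists>q. is_path ?G q \<and> hd q = u \<and> last q = v \<and> length q \<le> 3"
  proof cases
    case 1
    with \<open>y \<in> Q\<close> \<open>u \<noteq> v\<close> disj show ?thesis
      by (intro exI[of _ "[u, y, v]"]) (auto simp: is_path_3 insert_commute)
  next
    case 2
    with \<open>x \<in> P\<close> \<open>u \<noteq> v\<close> disj show ?thesis
      by (intro exI[of _ "[u, x, v]"]) (auto simp: is_path_3)
  next
    case 3
    with \<open>u \<noteq> v\<close> uv show ?thesis
      by (intro exI[of _ "[u, v]"]) (simp add: is_path_2)
  qed
  with sp show ?thesis
    unfolding is_shortest_path_def by fastforce
qed

lemma strong_edge_geodetic_complete_bipE:
  assumes disj: "P \<inter> Q = {}" and sge: "strong_edge_geodetic (complete_bip P Q) S"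
  obtains A where "\<And>x y. x \<in> P \<Longrightarrow> y \<in> Q - S \<Longrightarrow>
       \<exists>a c. x \<in> {a, c} \<and> a \<in> P \<inter> S \<and> c \<in> P \<inter> S \<and> a \<noteq> c \<and> A {a, c} = Some [a, y, c]"
proof -
  let ?G = "complete_bip P Q"
  obtain A where cov: "\<And>e. e \<in> edges ?G \<Longrightarrow> \<exists>p. e \<in> path_edges p \<and> hd p \<in> S \<and> last p \<in> S
        \<and> hd p \<noteq> last p \<and> A {hd p, last p} = Some p \<and> is_shortest_path ?G (hd p) (last p) p"
    using strong_edge_geodeticE[OF sge] by blast
  show thesis
  proof (rule that[of A])
    fix x y assume x: "x \<in> P" and y: "y \<in> Q - S"
    then have "{x, y} \<in> edges ?G" by auto
    from cov[OF this] obtain p where p: "{x, y} \<in> path_edges p" "hd p \<in> S" "last p \<in> S"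
      "hd p \<noteq> last p" "A {hd p, last p} = Some p" "is_shortest_path ?G (hd p) (last p) p"
      by blast
    have "length p \<le> 3"
      using shortest_path_complete_bip_length[OF disj p(6,4)] .
    moreover have "y \<notin> {hd p, last p}"
      using p(2,3) y by auto
    ultimately have "\<exists>a c. p = [a, y, c] \<and> x \<in> {a, c}"
      by (rule path_edge_interior_vertex[OF _ p(1)])
    then obtain a c where ac: "p = [a, y, c]" "x \<in> {a, c}" by blast
    then have "is_path ?G [a, y, c]"
      using p(6) unfolding is_shortest_path_def by simp
    then have "{a, y} \<in> edges ?G" "{c, y} \<in> edges ?G" "a \<noteq> c"
      by (simp_all add: is_path_3 insert_commute)
    moreover have "y \<in> Q" using y by simp
    ultimately have "a \<in> P" "c \<in> P" "a \<noteq> c"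
      using edge_complete_bip_other_end[OF disj] by blast+
    then show "\<exists>a c. x \<in> {a, c} \<and> a \<in> P \<inter> S \<and> c \<in> P \<inter> S \<and> a \<noteq> c \<and> A {a, c} = Some [a, y, c]"
      using ac p(2,3,5) by auto
  qed
qed

lemma strong_edge_geodetic_complete_bip_contains_part:
  assumes "P \<inter> Q = {}" "strong_edge_geodetic (complete_bip P Q) S"
  shows "P \<subseteq> S \<or> Q \<subseteq> S"
proof (rule ccontr)
  assume "\<not> ?thesis"
  then obtain x y where x: "x \<in> P - S" and y: "y \<in> Q - S" by blast
  obtain A where "\<And>x y. x \<in> P \<Longrightarrow> y \<in> Q - S \<Longrightarrow>
       \<exists>a c. x \<in> {a, c} \<and> a \<in> P \<inter> S \<and> c \<in> P \<inter> S \<and> a \<noteq> c \<and> A {a, c} = Some [a, y, c]"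
    using strong_edge_geodetic_complete_bipE[OF assms] by metis
  from this[of x y] x y show False by blast
qed

lemma strong_edge_geodetic_complete_bip_missing_bound:
  assumes fin: "finite P" "finite Q" and disj: "P \<inter> Q = {}"
    and sge: "strong_edge_geodetic (complete_bip P Q) S" and "P \<subseteq> S"
  shows "card (Q - S) * ((card P + 1) div 2) \<le> card P choose 2"
proof -
  obtain A where through: "\<And>x y. x \<in> P \<Longrightarrow> y \<in> Q - S \<Longrightarrow>
       \<exists>a c. x \<in> {a, c} \<and> a \<in> P \<inter> S \<and> c \<in> P \<inter> S \<and> a \<noteq> c \<and> A {a, c} = Some [a, y, c]"
    using strong_edge_geodetic_complete_bipE[OF disj sge] by metis
  define pairs_via where
    "pairs_via y = {{a, c} | a c. a \<in> P \<and> c \<in> P \<and> a \<noteq> c \<and> A {a, c} = Some [a, y, c]}" for y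
  have pairs_via_sub: "pairs_via y \<subseteq> {\<pi>. \<pi> \<subseteq> P \<and> card \<pi> = 2}" for y
    unfolding pairs_via_def by auto
  then have fin_pairs_via: "finite (pairs_via y)" for y
    by (rule finite_subset) (use fin in auto)
  have pairs_via_disjoint: "pairs_via y \<inter> pairs_via y' = {}" if "y \<noteq> y'" for y y'
    using that unfolding pairs_via_def by (auto simp: doubleton_eq_iff insert_commute)
  have "(card P + 1) div 2 \<le> card (pairs_via y)" if y: "y \<in> Q - S" for y
  proof -
    have "P \<subseteq> \<Union>(pairs_via y)"
    proof
      fix x assume "x \<in> P"
      then obtain a c where ac: "x \<in> {a, c}" "a \<in> P" "c \<in> P" "a \<noteq> c" "A {a, c} = Some [a, y, c]"
        using through[OF _ y] by blast
      then have "{a, c} \<in> pairs_via y"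
        unfolding pairs_via_def by blast
      with ac(1) show "x \<in> \<Union>(pairs_via y)" by blast
    qed
    with fin_pairs_via pairs_via_sub have "card P \<le> 2 * card (pairs_via y)"
      by (intro card_le_double_card_of_pair_cover) auto
    then show ?thesis by simp
  qed
  then have "card (Q - S) * ((card P + 1) div 2) \<le> (\<Sum>y\<in>Q - S. card (pairs_via y))"
    using sum_bounded_below[of "Q - S" "(card P + 1) div 2" "\<lambda>y. card (pairs_via y)"] by simp
  also have "\<dots> = card (\<Union>y\<in>Q - S. pairs_via y)"
    using fin fin_pairs_via pairs_via_disjoint by (intro card_UN_disjoint[symmetric]) auto
  also have "\<dots> \<le> card {\<pi>. \<pi> \<subseteq> P \<and> card \<pi> = 2}"
    using fin pairs_via_sub by (intro card_mono) auto
  also have "\<dots> = card P choose 2"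
    using fin by (simp add: n_subsets)
  finally show ?thesis .
qed

lemma card_strong_edge_geodetic_complete_bip:
  assumes fin: "finite P" "finite Q" and disj: "P \<inter> Q = {}"
    and sge: "strong_edge_geodetic (complete_bip P Q) S" and "P \<subseteq> S"
  obtains k where "card S + k = card P + card Q" "k * ((card P + 1) div 2) \<le> card P choose 2"
proof
  have "S = P \<union> (Q \<inter> S)"
    using sge \<open>P \<subseteq> S\<close> unfolding strong_edge_geodetic_def by auto
  then have "card S = card P + card (Q \<inter> S)"
    using fin disj by (metis card_Un_disjoint disjoint_iff finite_Int IntD1)
  then show "card S + card (Q - S) = card P + card Q"
    using card_Int_Diff[OF fin(2), of S] by simp
qed (rule strong_edge_geodetic_complete_bip_missing_bound[OF assms])

lemma strong_edge_geodetic_K_bip_cases: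
  assumes "strong_edge_geodetic (K_bip n m) S"
  obtains k where "card S + k = n + m" "k * ((n + 1) div 2) \<le> n choose 2"
  | k where "card S + k = n + m" "k * ((m + 1) div 2) \<le> m choose 2"
proof -
  let ?X = "Inl ` {..<n} :: (nat + nat) set" and ?Y = "Inr ` {..<m} :: (nat + nat) set"
  have card: "card ?X = n" "card ?Y = m" by (simp_all add: card_image)
  have fin: "finite ?X" "finite ?Y" and disj: "?X \<inter> ?Y = {}" "?Y \<inter> ?X = {}" by auto
  have sge: "strong_edge_geodetic (complete_bip ?X ?Y) S" "strong_edge_geodetic (complete_bip ?Y ?X) S"
    using assms by (simp_all add: K_bip_eq_complete_bip complete_bip_commute[of ?X])
  from strong_edge_geodetic_complete_bip_contains_part[OF disj(1) sge(1)]
  show thesis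
  proof
    assume "?X \<subseteq> S"
    from card_strong_edge_geodetic_complete_bip[OF fin disj(1) sge(1) this]
    obtain k where "card S + k = card ?X + card ?Y" "k * ((card ?X + 1) div 2) \<le> card ?X choose 2" .
    with that(1)[of k] show thesis unfolding card by simp
  next
    assume "?Y \<subseteq> S"
    from card_strong_edge_geodetic_complete_bip[OF fin(2,1) disj(2) sge(2) this]
    obtain k where "card S + k = card ?Y + card ?X" "k * ((card ?Y + 1) div 2) \<le> card ?Y choose 2" .
    with that(2)[of k] show thesis unfolding card by simp
  qed
qed

lemma strong_edge_geodetic_K_bip_verts: "strong_edge_geodetic (K_bip n m) (verts (K_bip n m))"
  by (rule strong_edge_geodetic_verts) (auto simp: K_bip_eq_complete_bip)

theorem mainTheorem6:
  fixes n :: nat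
  assumes "n \<ge> 3" and "odd n"
  shows "sg_e (K_bip n n) \<ge> n + 2 \<and> sg_e (K_bip n (n - 1)) \<ge> n + 1"
proof
  have n: "odd n" "1 < n" "0 < n - 1" using assms by auto
  show "n + 2 \<le> sg_e (K_bip n n)"
  proof (rule le_sg_eI[OF strong_edge_geodetic_K_bip_verts])
    fix S assume "strong_edge_geodetic (K_bip n n) S"
    then show "n + 2 \<le> card S"
      by (cases rule: strong_edge_geodetic_K_bip_cases) (use ceil_half_mult_le_choose_two_odd n in fastforce)+
  qed
  show "n + 1 \<le> sg_e (K_bip n (n - 1))"
  proof (rule le_sg_eI[OF strong_edge_geodetic_K_bip_verts])
    fix S assume "strong_edge_geodetic (K_bip n (n - 1)) S"
    then show "n + 1 \<le> card S"
    proof (cases rule: strong_edge_geodetic_K_bip_cases)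
      case (1 k)
      with ceil_half_mult_le_choose_two_odd[OF _ n(1,2)] show ?thesis by fastforce
    next
      case (2 k)
      with ceil_half_mult_le_choose_two_less[OF _ n(3)] show ?thesis by fastforce
    qed
  qed
qed

end
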